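(* Let $\{|\psi_i\rangle=|\psi_i^A\rangle\otimes|\psi_i^B\rangle\}_{i=1}^r$ be a set of product states in $\mathcal H_A\otimes\mathcal H_B$ (finite-dimensional, all factors nonzero) whose graphs satisfy $G_A=\overline{G_B}$, i.e. for all $i\neq j$, $\langle\psi_i^A|\psi_j^A\rangle=0 \iff \langle\psi_i^B|\psi_j^B\rangle\neq0$. Then the states are perfectly distinguishable both by one-way LOCC with Alice measuring first and by one-way LOCC with Bob measuring first if and only if they are perfectly distinguishable by a product measurement.
   Context: The graph $G_A$ has vertex set $\{1,\dots,r\}$ with an edge $\{u,v\}$ ($u\ne v$) iff $\langle\psi_u^A|\psi_v^A\rangle\ne0$; $G_B$ likewise with Bob's vectors; $\overline{G}$ is the complement graph. One-way LOCC with Alice first: there exist positive semidefinite $Q_1,\dots,Q_N$ on $\mathcal H_A$ with $\sum_jQ_j=I$ and, for each $j$, positive semidefinite $R^{(j)}_1,\dots,R^{(j)}_r$ on $\mathcal H_B$ with $\sum_kR^{(j)}_k=I$, such that $\langle\psi_l|Q_j\otimes R^{(j)}_k|\psi_l\rangle=0$ for all $j$ and $k\ne l$. One-way LOCC with Bob first: the same with the roles of $\mathcal H_A$ and $\mathcal H_B$ exchanged (Bob's measurement first, Alice's measurement depending on Bob's outcome). Perfect distinguishability by a product measurement: there exist positive semidefinite $A_1,\dots,A_p$ on $\mathcal H_A$ summing to $I$ and positive semidefinite $B_1,\dots,B_q$ on $\mathcal H_B$ summing to $I$ such that for every pair $(a,b)$ there is at most one index $k$ with $\langle\psi_k|A_a\otimes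 B_b|\psi_k\rangle\neq0$. *)

theory Defs
  imports "HOL-Analysis.Analysis"
begin

text \<open>Finite-dimensional Hilbert spaces are modelled as complex^'n with 'n a finite type;
  operators as matrices complex^'n^'n acting by *v.\<close>

definition cinner :: "complex^'n \<Rightarrow> complex^'n \<Rightarrow> complex" where
  "cinner x y = (\<Sum>i\<in>UNIV. cnj (x $ i) * y $ i)"

definition psd :: "complex^'n^'n \<Rightarrow> bool" where
  "psd M \<longleftrightarrow> (\<forall>x. Im (cinner x (M *v x)) = 0 \<and> Re (cinner x (M *v x)) \<ge> 0)"

definition expect :: "complex^'n \<Rightarrow> complex^'n^'n \<Rightarrow> complex" where
  "expect x M = cinner x (M *v x)"

definition tensor_vec :: "complex^'a \<Rightarrow> complex^'b \<Rightarrow> complex^('a \<times> 'b)" where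
  "tensor_vec x y = (\<chi> p. x $ fst p * y $ snd p)"

definition tensor_mat :: "complex^'a^'a \<Rightarrow> complex^'b^'b \<Rightarrow> complex^('a \<times> 'b)^('a \<times> 'b)" where
  "tensor_mat M N = (\<chi> p q. M $ fst p $ fst q * N $ snd p $ snd q)"

definition gram_graph :: "nat \<Rightarrow> (nat \<Rightarrow> complex^'n) \<Rightarrow> (nat \<times> nat) set" where
  "gram_graph r v = {(u, w). u < r \<and> w < r \<and> u \<noteq> w \<and> cinner (v u) (v w) \<noteq> 0}"

definition complement_graph :: "nat \<Rightarrow> (nat \<times> nat) set \<Rightarrow> (nat \<times> nat) set" where
  "complement_graph r E = {(u, w). u < r \<and> w < r \<and> u \<noteq> w \<and> (u, w) \<notin> E}"

definition one_way_LOCC_A :: "nat \<Rightarrow> (nat \<Rightarrow> complex^'a) \<Rightarrow> (nat \<Rightarrow> complex^'b) \<Rightarrow> bool" where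
  "one_way_LOCC_A r psiA psiB \<longleftrightarrow>
    (\<exists>(N::nat) (Q::nat \<Rightarrow> complex^'a^'a) (R::nat \<Rightarrow> nat \<Rightarrow> complex^'b^'b).
       (\<forall>j<N. psd (Q j)) \<and> (\<Sum>j<N. Q j) = mat 1 \<and>
       (\<forall>j<N. (\<forall>k<r. psd (R j k)) \<and> (\<Sum>k<r. R j k) = mat 1) \<and>
       (\<forall>j<N. \<forall>k<r. \<forall>l<r. k \<noteq> l \<longrightarrow>
          expect (tensor_vec (psiA l) (psiB l)) (tensor_mat (Q j) (R j k)) = 0))"

definition one_way_LOCC_B :: "nat \<Rightarrow> (nat \<Rightarrow> complex^'a) \<Rightarrow> (nat \<Rightarrow> complex^'b) \<Rightarrow> bool" where
  "one_way_LOCC_B r psiA psiB \<longleftrightarrow>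
    (\<exists>(N::nat) (Q::nat \<Rightarrow> complex^'b^'b) (R::nat \<Rightarrow> nat \<Rightarrow> complex^'a^'a).
       (\<forall>j<N. psd (Q j)) \<and> (\<Sum>j<N. Q j) = mat 1 \<and>
       (\<forall>j<N. (\<forall>k<r. psd (R j k)) \<and> (\<Sum>k<r. R j k) = mat 1) \<and>
       (\<forall>j<N. \<forall>k<r. \<forall>l<r. k \<noteq> l \<longrightarrow>
          expect (tensor_vec (psiA l) (psiB l)) (tensor_mat (R j k) (Q j)) = 0))"

definition product_distinguishable :: "nat \<Rightarrow> (nat \<Rightarrow> complex^'a) \<Rightarrow> (nat \<Rightarrow> complex^'b) \<Rightarrow> bool" where
  "product_distinguishable r psiA psiB \<longleftrightarrow>
    (\<exists>(p::nat) (q::nat) (A::nat \<Rightarrow> complex^'a^'a) (B::nat \<Rightarrow> complex^'b^'b).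
       (\<forall>a<p. psd (A a)) \<and> (\<Sum>a<p. A a) = mat 1 \<and>
       (\<forall>b<q. psd (B b)) \<and> (\<Sum>b<q. B b) = mat 1 \<and>
       (\<forall>a<p. \<forall>b<q. \<forall>k<r. \<forall>l<r.
          expect (tensor_vec (psiA k) (psiB k)) (tensor_mat (A a) (B b)) \<noteq> 0 \<and>
          expect (tensor_vec (psiA l) (psiB l)) (tensor_mat (A a) (B b)) \<noteq> 0 \<longrightarrow> k = l))"

end

theory Submission
  imports Defs
begin

text \<open>Any product measurement is refined into a one-way protocol in either order by letting the
  second party coarse-grain its outcomes according to the single state compatible with the outcome
  pair. Conversely, take the two first-round measurements of the one-way protocols as a product
  measurement. If an outcome pair were compatible with two states \<open>k \<noteq> l\<close>, then after Alice's
  outcome Bob's second measurement must tell \<open>\<psi>\<^sub>k\<^sup>B\<close> and \<open>\<psi>\<^sub>l\<^sup>B\<close> apart perfectly,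
  forcing them to be orthogonal, and symmetrically \<open>\<psi>\<^sub>k\<^sup>A \<bottom> \<psi>\<^sub>l\<^sup>A\<close>. This is impossible
  when \<open>G\<^sub>A\<close> is the complement of \<open>G\<^sub>B\<close>.\<close>

lemma expect_tensor:
  "expect (tensor_vec a b) (tensor_mat Q R) = expect a Q * expect b R"
proof -
  define X where "X i = (\<Sum>j\<in>UNIV. Q $ i $ j * a $ j)" for i
  define Y where "Y k = (\<Sum>l\<in>UNIV. R $ k $ l * b $ l)" for k
  have mult: "(\<Sum>q\<in>UNIV. tensor_mat Q R $ p $ q * tensor_vec a b $ q) = X (fst p) * Y (snd p)" for p
  proof -
    have "X (fst p) * Y (snd p) = (\<Sum>j\<in>UNIV. \<Sum>l\<in>UNIV. (Q $ fst p $ j * a $ j) * (R $ snd p $ l * b $ l))"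
      unfolding X_def Y_def by (rule sum_product)
    also have "\<dots> = (\<Sum>q\<in>UNIV \<times> UNIV. (Q $ fst p $ fst q * a $ fst q) * (R $ snd p $ snd q * b $ snd q))"
      by (subst sum.cartesian_product) (simp add: case_prod_beta)
    also have "\<dots> = (\<Sum>q\<in>UNIV. tensor_mat Q R $ p $ q * tensor_vec a b $ q)"
      unfolding tensor_mat_def tensor_vec_def UNIV_Times_UNIV
      by (intro sum.cong refl) (simp add: ac_simps)
    finally show ?thesis by simp
  qed
  have "expect (tensor_vec a b) (tensor_mat Q R) = (\<Sum>p\<in>UNIV. cnj (tensor_vec a b $ p) * (X (fst p) * Y (snd p)))"
    unfolding expect_def cinner_def matrix_vector_mult_def using mult by simp
  also have "\<dots> = (\<Sum>p\<in>UNIV \<times> UNIV. (cnj (a $ fst p) * X (fst p)) * (cnj (b $ snd p) * Y (snd p)))"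
    unfolding UNIV_Times_UNIV tensor_vec_def by (intro sum.cong refl) (simp add: ac_simps)
  also have "\<dots> = (\<Sum>i\<in>UNIV. cnj (a $ i) * X i) * (\<Sum>k\<in>UNIV. cnj (b $ k) * Y k)"
    unfolding sum_product sum.cartesian_product by (simp add: case_prod_beta)
  also have "\<dots> = expect a Q * expect b R"
    unfolding expect_def cinner_def matrix_vector_mult_def X_def Y_def by simp
  finally show ?thesis .
qed

lemma cinner_add_scale_left: "cinner (x + c *s y) z = cinner x z + cnj c * cinner y z"
  unfolding cinner_def by (simp add: sum.distrib sum_distrib_left algebra_simps)

lemma cinner_add_scale_right: "cinner z (x + c *s y) = cinner z x + c * cinner z y"
  unfolding cinner_def by (simp add: sum.distrib sum_distrib_left algebra_simps)

lemma matrix_vector_mult_add_scale: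
  fixes R :: "complex^'n^'m"
  shows "R *v (x + c *s y) = R *v x + c *s (R *v y)"
  unfolding matrix_vector_mult_def
  by (simp add: vec_eq_iff distrib_left sum.distrib sum_distrib_left ac_simps)

lemma cinner_matrix_sum:
  fixes M :: "nat \<Rightarrow> complex^'n^'n"
  assumes "finite S"
  shows "cinner y ((\<Sum>k\<in>S. M k) *v x) = (\<Sum>k\<in>S. cinner y (M k *v x))"
  using assms
proof (induction S rule: finite_induct)
  case empty
  then show ?case unfolding cinner_def matrix_vector_mult_def by simp
next
  case (insert a S)
  have "cinner y ((M a + (\<Sum>k\<in>S. M k)) *v x) = cinner y (M a *v x) + cinner y ((\<Sum>k\<in>S. M k) *v x)"
    unfolding cinner_def matrix_vector_mult_def
    by (simp add: distrib_left distrib_right sum.distrib)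
  then show ?case using insert by simp
qed

lemma expect_sum:
  fixes M :: "nat \<Rightarrow> complex^'n^'n"
  assumes "finite S"
  shows "expect x (\<Sum>k\<in>S. M k) = (\<Sum>k\<in>S. expect x (M k))"
  unfolding expect_def using cinner_matrix_sum[OF assms] .

lemma psd_sum:
  fixes M :: "nat \<Rightarrow> complex^'n^'n"
  assumes "finite S" "\<forall>k\<in>S. psd (M k)"
  shows "psd (\<Sum>k\<in>S. M k)"
  using assms unfolding psd_def cinner_matrix_sum[OF assms(1)]
  by (simp add: Im_sum Re_sum sum_nonneg)

lemma linear_coeff_eq_0_if_quadratic_nonneg:
  fixes c D :: real
  assumes "D \<ge> 0" and "\<And>e. c * e + e^2 * D \<ge> 0"
  shows "c = 0"
proof (rule ccontr)
  assume "c \<noteq> 0"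
  define e where "e = -c / (D + 1)"
  have "D + 1 > 0" using assms(1) by simp
  then have eD: "e * D = - c - e" and "e \<noteq> 0"
    using \<open>c \<noteq> 0\<close> unfolding e_def by (simp_all add: field_simps)
  have "c * e + e^2 * D = e * (c + e * D)" by (simp add: power2_eq_square algebra_simps)
  also have "\<dots> = - (e * e)" using eD by simp
  finally show False
    using assms(2)[of e] \<open>e \<noteq> 0\<close> not_real_square_gt_zero[of e] by linarith
qed

text \<open>The form \<open>t \<mapsto> expect (x + t y) R\<close> has no constant term and is nonnegative, so its
  linear part vanishes; taking \<open>t\<close> real and purely imaginary recovers both cross terms.\<close>
lemma psd_expect_eq_0_imp_orthogonal:
  assumes "psd R" and "expect x R = 0"
  shows "cinner y (R *v x) = 0 \<and> cinner x (R *v y) = 0"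
proof -
  define A where "A = cinner x (R *v y)"
  define B where "B = cinner y (R *v x)"
  define D where "D = cinner y (R *v y)"
  have D: "Im D = 0" "Re D \<ge> 0" using assms(1) unfolding psd_def D_def by auto
  have form: "expect (x + t *s y) R = t * A + cnj t * B + cnj t * t * D" for t
    using assms(2) unfolding expect_def matrix_vector_mult_add_scale
      cinner_add_scale_left cinner_add_scale_right A_def B_def D_def
    by (simp add: algebra_simps)
  have P: "Im (t * A + cnj t * B + cnj t * t * D) = 0 \<and> Re (t * A + cnj t * B + cnj t * t * D) \<ge> 0" for t
    using assms(1) unfolding psd_def form[symmetric] expect_def by blast
  have "Im A + Im B = 0" using P[of 1] D by simp
  moreover have "Re A - Re B = 0" using P[of \<i>] D by simp
  moreover have "Re A + Re B = 0"
    using P[of "of_real _"] D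
    by (intro linear_coeff_eq_0_if_quadratic_nonneg[OF D(2)]) (simp add: power2_eq_square algebra_simps)
  moreover have "Im B - Im A = 0"
    using P[of "\<i> * of_real _"] D
    by (intro linear_coeff_eq_0_if_quadratic_nonneg[OF D(2)]) (simp add: power2_eq_square algebra_simps)
  ultimately have "A = 0" "B = 0" by (simp_all add: complex_eq_iff)
  then show ?thesis unfolding A_def B_def by simp
qed

definition povm :: "nat \<Rightarrow> (nat \<Rightarrow> complex^'n^'n) \<Rightarrow> bool" where
  "povm n M \<longleftrightarrow> (\<forall>k<n. psd (M k)) \<and> (\<Sum>k<n. M k) = mat 1"

lemma povm_coarse_graining:
  assumes "povm q B" and "\<forall>b<q. f b < r"
  shows "povm r (\<lambda>k. \<Sum>b\<in>{b\<in>{..<q}. f b = k}. B b)"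
proof -
  have "(\<Sum>k<r. \<Sum>b\<in>{b\<in>{..<q}. f b = k}. B b) = (\<Sum>b<q. B b)"
    using assms(2) by (intro sum.group) auto
  then show ?thesis using assms(1) unfolding povm_def by (auto intro!: psd_sum)
qed

text \<open>Split \<open>x l = \<Sum>\<^sub>j R j x l\<close>: each summand is killed by \<open>R j\<close> acting on \<open>x l\<close>, or,
  for \<open>j = l\<close>, by \<open>R j\<close> acting on \<open>x k\<close>.\<close>
lemma povm_discriminating_imp_orthogonal:
  fixes R :: "nat \<Rightarrow> complex^'n^'n"
  assumes "povm r R" "k < r" "l < r" "k \<noteq> l"
    and "\<forall>j<r. j \<noteq> l \<longrightarrow> expect (x l) (R j) = 0" "\<forall>j<r. j \<noteq> k \<longrightarrow> expect (x k) (R j) = 0"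
  shows "cinner (x k) (x l) = 0"
proof -
  have "cinner (x k) (x l) = cinner (x k) ((\<Sum>j<r. R j) *v x l)"
    using assms(1) unfolding povm_def by (simp add: matrix_vector_mul_lid)
  also have "\<dots> = (\<Sum>j<r. cinner (x k) (R j *v x l))" by (simp add: cinner_matrix_sum)
  also have "\<dots> = 0"
  proof (intro sum.neutral ballI)
    fix j assume "j \<in> {..<r}"
    then have "psd (R j)" using assms(1) unfolding povm_def by simp
    with assms \<open>j \<in> {..<r}\<close> show "cinner (x k) (R j *v x l) = 0"
      using psd_expect_eq_0_imp_orthogonal[of "R j" "x l" "x k"]
        psd_expect_eq_0_imp_orthogonal[of "R j" "x k" "x l"]
      by (cases "j = l") auto
  qed
  finally show ?thesis .
qed

lemma one_way_LOCC_A_iff: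
  "one_way_LOCC_A r psiA psiB \<longleftrightarrow>
    (\<exists>N Q R. povm N Q \<and> (\<forall>j<N. povm r (R j)) \<and>
       (\<forall>j<N. \<forall>k<r. \<forall>l<r. k \<noteq> l \<longrightarrow> expect (psiA l) (Q j) * expect (psiB l) (R j k) = 0))"
  unfolding one_way_LOCC_A_def povm_def expect_tensor by (simp only: conj_assoc)

lemma one_way_LOCC_B_iff_swap: "one_way_LOCC_B r psiA psiB \<longleftrightarrow> one_way_LOCC_A r psiB psiA"
  unfolding one_way_LOCC_A_def one_way_LOCC_B_def expect_tensor by (simp add: mult.commute)

lemma product_distinguishable_iff:
  "product_distinguishable r psiA psiB \<longleftrightarrow>
    (\<exists>p q A B. povm p A \<and> povm q B \<and>
       (\<forall>a<p. \<forall>b<q. \<forall>k<r. \<forall>l<r.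
          expect (psiA k) (A a) * expect (psiB k) (B b) \<noteq> 0 \<and>
          expect (psiA l) (A a) * expect (psiB l) (B b) \<noteq> 0 \<longrightarrow> k = l))"
  unfolding product_distinguishable_def povm_def expect_tensor by (simp only: conj_assoc)

lemma product_distinguishable_swap:
  assumes "product_distinguishable r psiA psiB"
  shows "product_distinguishable r psiB psiA"
proof -
  obtain p q A B where "povm p A" "povm q B" and "\<forall>a<p. \<forall>b<q. \<forall>k<r. \<forall>l<r.
      expect (psiA k) (A a) * expect (psiB k) (B b) \<noteq> 0 \<and>
      expect (psiA l) (A a) * expect (psiB l) (B b) \<noteq> 0 \<longrightarrow> k = l"
    using assms unfolding product_distinguishable_iff by blast
  then show ?thesis unfolding product_distinguishable_iff
    by (intro exI[of _ q] exI[of _ p] exI[of _ B] exI[of _ A]) (simp add: mult.commute)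
qed

lemma one_way_outcome_supported_imp_orthogonal:
  assumes "povm r R" "\<forall>k<r. \<forall>l<r. k \<noteq> l \<longrightarrow> expect (x l) Q * expect (y l) (R k) = 0"
    and "k < r" "l < r" "k \<noteq> l" "expect (x k) Q \<noteq> 0" "expect (x l) Q \<noteq> 0"
  shows "cinner (y k) (y l) = 0"
  using assms by (intro povm_discriminating_imp_orthogonal[of r R k l y]) auto

lemma product_distinguishable_if_one_way_LOCC_A_B:
  assumes "one_way_LOCC_A r psiA psiB" "one_way_LOCC_B r psiA psiB"
    and nonorth: "\<forall>k<r. \<forall>l<r. k \<noteq> l \<longrightarrow> cinner (psiA k) (psiA l) \<noteq> 0 \<or> cinner (psiB k) (psiB l) \<noteq> 0"
  shows "product_distinguishable r psiA psiB"
proof -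
  obtain N Q R where Q: "povm N Q" and R: "\<forall>j<N. povm r (R j)"
    and LA: "\<forall>j<N. \<forall>k<r. \<forall>l<r. k \<noteq> l \<longrightarrow> expect (psiA l) (Q j) * expect (psiB l) (R j k) = 0"
    using assms(1) unfolding one_way_LOCC_A_iff by blast
  obtain N' Q' R' where Q': "povm N' Q'" and R': "\<forall>j<N'. povm r (R' j)"
    and LB: "\<forall>j<N'. \<forall>k<r. \<forall>l<r. k \<noteq> l \<longrightarrow> expect (psiB l) (Q' j) * expect (psiA l) (R' j k) = 0"
    using assms(2) unfolding one_way_LOCC_B_iff_swap one_way_LOCC_A_iff by blast
  have "k = l"
    if "a < N" "b < N'" "k < r" "l < r"
      and "expect (psiA k) (Q a) * expect (psiB k) (Q' b) \<noteq> 0"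
      and "expect (psiA l) (Q a) * expect (psiB l) (Q' b) \<noteq> 0" for a b k l
  proof (rule ccontr)
    assume "k \<noteq> l"
    have "cinner (psiB k) (psiB l) = 0"
      using that \<open>k \<noteq> l\<close> R LA by (intro one_way_outcome_supported_imp_orthogonal[of r "R a" psiA "Q a"]) auto
    moreover have "cinner (psiA k) (psiA l) = 0"
      using that \<open>k \<noteq> l\<close> R' LB by (intro one_way_outcome_supported_imp_orthogonal[of r "R' b" psiB "Q' b"]) auto
    ultimately show False using nonorth that \<open>k \<noteq> l\<close> by blast
  qed
  then show ?thesis unfolding product_distinguishable_iff using Q Q' by blast
qed

text \<open>Bob measures \<open>B\<close> and reports the unique state compatible with both outcomes; states
  supported on no outcome pair may be reported arbitrarily, which needs \<open>r \<ge> 1\<close>.\<close>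
lemma one_way_LOCC_A_if_product_distinguishable:
  assumes "r \<ge> 1" and "product_distinguishable r psiA psiB"
  shows "one_way_LOCC_A r psiA psiB"
proof -
  obtain p q A B where A: "povm p A" and B: "povm q B"
    and sep: "\<forall>a<p. \<forall>b<q. \<forall>k<r. \<forall>l<r.
      expect (psiA k) (A a) * expect (psiB k) (B b) \<noteq> 0 \<and>
      expect (psiA l) (A a) * expect (psiB l) (B b) \<noteq> 0 \<longrightarrow> k = l"
    using assms(2) unfolding product_distinguishable_iff by blast
  define E where "E a b l = expect (psiA l) (A a) * expect (psiB l) (B b)" for a b l
  define label where "label a b = (SOME k. k < r \<and> (\<forall>l<r. E a b l \<noteq> 0 \<longrightarrow> l = k))" for a b
  have label: "label a b < r \<and> (\<forall>l<r. E a b l \<noteq> 0 \<longrightarrow> l = label a b)"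
    if "a < p" "b < q" for a b
    unfolding label_def
  proof (rule someI_ex)
    show "\<exists>k. k < r \<and> (\<forall>l<r. E a b l \<noteq> 0 \<longrightarrow> l = k)"
    proof (cases "\<exists>k<r. E a b k \<noteq> 0")
      case True
      then show ?thesis using sep that unfolding E_def by blast
    next
      case False
      then show ?thesis using assms(1) by (intro exI[of _ 0]) auto
    qed
  qed
  define R where "R a k = (\<Sum>b\<in>{b\<in>{..<q}. label a b = k}. B b)" for a k
  have "povm r (R a)" if "a < p" for a
    unfolding R_def using B label that by (intro povm_coarse_graining) auto
  moreover have "expect (psiA l) (A a) * expect (psiB l) (R a k) = 0"
    if "a < p" "k < r" "l < r" "k \<noteq> l" for a k l
  proof -
    have "expect (psiA l) (A a) * expect (psiB l) (R a k)
        = (\<Sum>b\<in>{b\<in>{..<q}. label a b = k}. E a b l)"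
      unfolding R_def E_def by (simp add: expect_sum sum_distrib_left)
    also have "\<dots> = 0"
      using label that by (intro sum.neutral) auto
    finally show ?thesis .
  qed
  ultimately show ?thesis unfolding one_way_LOCC_A_iff using A by blast
qed

lemma gram_graph_eq_complement_iff:
  assumes "gram_graph r x = complement_graph r (gram_graph r y)" "k < r" "l < r" "k \<noteq> l"
  shows "cinner (x k) (x l) = 0 \<longleftrightarrow> cinner (y k) (y l) \<noteq> 0"
proof -
  have "(k, l) \<in> gram_graph r x \<longleftrightarrow> (k, l) \<in> complement_graph r (gram_graph r y)"
    using assms(1) by simp
  then show ?thesis using assms(2-4) unfolding gram_graph_def complement_graph_def by auto
qed

theorem theorem2:
  fixes psiA :: "nat \<Rightarrow> complex^'a" and psiB :: "nat \<Rightarrow> complex^'b" and r :: nat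
  assumes "r \<ge> 1"
    and "\<forall>i<r. psiA i \<noteq> 0 \<and> psiB i \<noteq> 0"
    and "gram_graph r psiA = complement_graph r (gram_graph r psiB)"
  shows "(one_way_LOCC_A r psiA psiB \<and> one_way_LOCC_B r psiA psiB) \<longleftrightarrow>
         product_distinguishable r psiA psiB"
proof
  assume "one_way_LOCC_A r psiA psiB \<and> one_way_LOCC_B r psiA psiB"
  moreover have "\<forall>k<r. \<forall>l<r. k \<noteq> l \<longrightarrow> cinner (psiA k) (psiA l) \<noteq> 0 \<or> cinner (psiB k) (psiB l) \<noteq> 0"
    using gram_graph_eq_complement_iff[OF assms(3)] by simp
  ultimately show "product_distinguishable r psiA psiB"
    by (intro product_distinguishable_if_one_way_LOCC_A_B) simp_all
next
  assume dist: "product_distinguishable r psiA psiB"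
  show "one_way_LOCC_A r psiA psiB \<and> one_way_LOCC_B r psiA psiB"
    unfolding one_way_LOCC_B_iff_swap
    using one_way_LOCC_A_if_product_distinguishable[OF assms(1) dist]
      one_way_LOCC_A_if_product_distinguishable[OF assms(1) product_distinguishable_swap[OF dist]]
    by (rule conjI)
qed

end
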